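(* Let $\lambda\ge 0$ and $\lambda_1,\dots,\lambda_M>0$. Suppose $g_1,\dots,g_M$ are $C^1$ functions on $[0,P)\times[0,\infty)$ (for some $P>0$), and write $t(p,v)=\sum_{\gamma=1}^M g_\gamma(p,v)$. Assume they satisfy: - $\lambda+t(p,v)>0$ on the whole domain; - the system of PDEs $$\frac{\partial g_\rho}{\partial p}(p,v)=\frac{1}{\lambda+t(p,v)}\,\frac{\partial g_\rho}{\partial v}(p,v),\qquad \rho=1,\dots,M;$$ - the initial conditions $g_\rho(0,v)=\big(\tfrac{1}{\lambda_\rho}+v\big)^{-1}$. Then for all $(p,v)$ in the domain and all $\rho$, $$g_\rho(p,v)=\Big(\frac{1}{\lambda_\rho}+v+\frac{p}{\lambda+\sum_{\gamma=1}^M g_\gamma(p,v)}\Big)^{-1}.$$ In particular, $$t(p,v)=\sum_\rho\Big(\tfrac{1}{\lambda_\rho}+v+\tfrac{p}{\lambda+t(p,v)}\Big)^{-1}.$$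
   Context: This PDE is the continuous approximation to the dataset-averaged diagonal entries $g_\rho(p,v)=\langle\tilde{\mathbf{G}}(p,v)_{\rho\rho}\rangle$, where $$\tilde{\mathbf{G}}(p,v)=\Big(\tfrac{1}{\lambda}\mathbf{\Phi}\mathbf{\Phi}^\top+\mathbf{\Lambda}^{-1}+v\mathbf{I}\Big)^{-1},$$ $\mathbf{\Phi}$ is the $M\times p$ matrix of kernel eigenfunctions evaluated at $p$ samples, and $\mathbf{\Lambda}={\rm diag}(\lambda_\rho)$. The number of samples $p$ is treated as a continuous variable. *)

theory Defs
  imports "HOL-Analysis.Analysis"
begin

end

(* Method of characteristics. Fix (p, v) and put s = lam + t(p, v). Along the line through
   (p, v) with slope dv/dp = -1/s, the PDE gives each g_rho the derivative
   dg_rho/dv * (1/(lam + t) - 1/s), so u = lam + t - s solves a linear ODE u' = -a u with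
   u(p) = 0, and a Gronwall estimate forces u = 0 on [0, p]. Hence every g_rho is constant
   along the line and equals its initial value at (0, v + p/s). *)

theory Submission
  imports Defs
begin

lemma linear_ode_solution_vanishing_at_end:
  fixes u a :: "real \<Rightarrow> real"
  assumes u': "\<And>t. t \<in> {t0..t1} \<Longrightarrow>
      (u has_real_derivative - a t * u t) (at t within {t0..t1})"
    and a_bounded: "\<And>t. t \<in> {t0..t1} \<Longrightarrow> \<bar>a t\<bar> \<le> K"
    and "u t1 = 0" and t: "t \<in> {t0..t1}"
  shows "u t = 0"
proof -
  \<comment> \<open>Since \<open>\<bar>a\<bar> \<le> K\<close>, the weighted energy \<open>w\<close> is nondecreasing.\<close>
  define w where "w t = exp (2 * K * t) * (u t)\<^sup>2" for t
  have w': "(w has_real_derivative 2 * exp (2 * K * s) * (u s)\<^sup>2 * (K - a s))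
      (at s within {t..t1})" if "s \<in> {t..t1}" for s
  proof -
    have "s \<in> {t0..t1}" using that t by auto
    then have "(w has_real_derivative exp (2 * K * s) * (2 * K) * (u s)\<^sup>2
        + exp (2 * K * s) * (2 * u s * (- a s * u s))) (at s within {t0..t1})"
      unfolding w_def by (auto intro!: derivative_eq_intros u' simp: power2_eq_square)
    then have "(w has_real_derivative 2 * exp (2 * K * s) * (u s)\<^sup>2 * (K - a s))
        (at s within {t0..t1})"
      by (simp add: power2_eq_square algebra_simps)
    then show ?thesis
      by (rule has_field_derivative_subset) (use t in auto)
  qed
  have "\<exists>s\<in>{t..t1}. w t1 - w t = (*) (2 * exp (2 * K * s) * (u s)\<^sup>2 * (K - a s)) (t1 - t)"
    using t by (intro mvt_very_simple) (auto simp: w'[unfolded has_field_derivative_def])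
  then obtain s where s: "s \<in> {t..t1}"
    and mvt: "w t1 - w t = 2 * exp (2 * K * s) * (u s)\<^sup>2 * (K - a s) * (t1 - t)"
    by (auto simp: mult.commute)
  have "K - a s \<ge> 0" using a_bounded[of s] s t by auto
  with s have "2 * exp (2 * K * s) * (u s)\<^sup>2 * (K - a s) * (t1 - t) \<ge> 0"
    by (intro mult_nonneg_nonneg) auto
  then have "w t \<le> w t1" using mvt by linarith
  moreover have "w t1 = 0" using \<open>u t1 = 0\<close> by (simp add: w_def)
  ultimately show "u t = 0" by (simp add: w_def mult_le_0_iff)
qed

lemma has_real_derivative_along_line:
  fixes f :: "real \<times> real \<Rightarrow> real"
  assumes f': "\<And>z. z \<in> D \<Longrightarrow>
      (f has_derivative (\<lambda>h. fst h * fp z + snd h * fv z)) (at z within D)"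
    and line: "(\<lambda>q. (q, c - q / s)) ` I \<subseteq> D" and "q \<in> I"
  shows "((\<lambda>q. f (q, c - q / s)) has_real_derivative
           fp (q, c - q / s) - fv (q, c - q / s) / s) (at q within I)"
proof -
  have "((\<lambda>q. (q, c - q / s)) has_derivative (\<lambda>h. (h, - h / s))) (at q within I)"
    unfolding divide_inverse by (auto intro!: derivative_eq_intros)
  from has_derivative_in_compose2[OF f' line \<open>q \<in> I\<close> this]
  show ?thesis
    unfolding has_field_derivative_def by (rule has_derivative_eq_rhs) (auto simp: algebra_simps)
qed

locale transport_system =
  fixes M :: nat and lam :: real and D :: "(real \<times> real) set"
    and g gp gv :: "nat \<Rightarrow> real \<times> real \<Rightarrow> real"
  assumes deriv: "\<And>\<rho> z. \<rho> \<in> {1..M} \<Longrightarrow> z \<in> D \<Longrightarrow>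
        (g \<rho> has_derivative (\<lambda>h. fst h * gp \<rho> z + snd h * gv \<rho> z)) (at z within D)"
    and cont_v: "\<And>\<rho>. \<rho> \<in> {1..M} \<Longrightarrow> continuous_on D (gv \<rho>)"
    and denom_pos: "\<And>z. z \<in> D \<Longrightarrow> lam + (\<Sum>\<gamma>=1..M. g \<gamma> z) > 0"
    and pde: "\<And>\<rho> z. \<rho> \<in> {1..M} \<Longrightarrow> z \<in> D \<Longrightarrow>
        gp \<rho> z = gv \<rho> z / (lam + (\<Sum>\<gamma>=1..M. g \<gamma> z))"
begin

definition denom :: "real \<times> real \<Rightarrow> real"
  where "denom z = lam + (\<Sum>\<gamma>=1..M. g \<gamma> z)"

lemma continuous_on_g: "\<rho> \<in> {1..M} \<Longrightarrow> continuous_on D (g \<rho>)"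
  using deriv has_derivative_continuous continuous_on_eq_continuous_within by blast

lemma has_real_derivative_g_along_line:
  assumes "\<rho> \<in> {1..M}" and line: "(\<lambda>q. (q, c - q / s)) ` I \<subseteq> D" and "q \<in> I"
  shows "((\<lambda>q. g \<rho> (q, c - q / s)) has_real_derivative
           gv \<rho> (q, c - q / s) * (1 / denom (q, c - q / s) - 1 / s)) (at q within I)"
proof -
  have "(q, c - q / s) \<in> D" using line \<open>q \<in> I\<close> by blast
  with has_real_derivative_along_line[OF deriv[OF \<open>\<rho> \<in> {1..M}\<close>] line \<open>q \<in> I\<close>]
  show ?thesis by (simp add: pde[OF \<open>\<rho> \<in> {1..M}\<close>] denom_def algebra_simps)
qed

lemma denom_constant_along_characteristic:
  assumes line: "(\<lambda>q. (q, c - q / s)) ` {0..p} \<subseteq> D"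
    and end_value: "denom (p, c - p / s) = s" and q: "q \<in> {0..p}"
  shows "denom (q, c - q / s) = s"
proof -
  define L where "L q = (q, c - q / s)" for q
  have L_in_D: "L q \<in> D" if "q \<in> {0..p}" for q
    using line that by (auto simp: L_def image_subset_iff)
  have "s > 0"
    using denom_pos[OF L_in_D[of p]] q end_value by (simp add: L_def denom_def)
  have denom_L_pos: "denom (L q) > 0" if "q \<in> {0..p}" for q
    using denom_pos[OF L_in_D[OF that]] by (simp add: denom_def)
  define a where "a q = (\<Sum>\<gamma>=1..M. gv \<gamma> (L q)) / (denom (L q) * s)" for q
  have ode: "((\<lambda>q. denom (L q) - s) has_real_derivative - a q * (denom (L q) - s))
      (at q within {0..p})" if "q \<in> {0..p}" for q
  proof -
    have "((\<lambda>q. lam + (\<Sum>\<gamma>=1..M. g \<gamma> (L q)) - s) has_real_derivative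
        (\<Sum>\<gamma>=1..M. gv \<gamma> (L q) * (1 / denom (L q) - 1 / s))) (at q within {0..p})"
      unfolding L_def
      by (auto intro!: derivative_eq_intros has_real_derivative_g_along_line line that)
    moreover have "(\<Sum>\<gamma>=1..M. gv \<gamma> (L q) * (1 / denom (L q) - 1 / s))
        = (\<Sum>\<gamma>=1..M. gv \<gamma> (L q)) * (1 / denom (L q) - 1 / s)"
      by (simp add: sum_distrib_right)
    moreover have "\<dots> = - a q * (denom (L q) - s)"
      using denom_L_pos[OF that] \<open>s > 0\<close> by (simp add: a_def field_simps)
    ultimately show ?thesis by (simp add: denom_def)
  qed
  have L_cont: "continuous_on {0..p} L"
    unfolding L_def using \<open>s > 0\<close> by (intro continuous_intros) auto
  have "continuous_on {0..p} a"
    unfolding a_def denom_def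
    using denom_L_pos \<open>s > 0\<close>
    by (intro continuous_intros continuous_on_compose2[OF cont_v L_cont]
        continuous_on_compose2[OF continuous_on_g L_cont])
      (force simp: denom_def L_in_D)+
  then obtain K where "\<And>q. q \<in> {0..p} \<Longrightarrow> \<bar>a q\<bar> \<le> K"
    using compact_imp_bounded[OF compact_continuous_image] bounded_iff
    by (metis compact_Icc image_eqI real_norm_def)
  from linear_ode_solution_vanishing_at_end[OF ode this _ q] end_value
  show ?thesis by (simp add: L_def)
qed

lemma g_constant_along_characteristic:
  assumes "\<rho> \<in> {1..M}" and line: "(\<lambda>q. (q, c - q / s)) ` {0..p} \<subseteq> D"
    and end_value: "denom (p, c - p / s) = s" and q: "q \<in> {0..p}"
  shows "g \<rho> (q, c - q / s) = g \<rho> (0, c)"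
proof -
  have "((\<lambda>q. g \<rho> (q, c - q / s)) has_real_derivative 0) (at q within {0..p})"
    if "q \<in> {0..p}" for q
    using has_real_derivative_g_along_line[OF \<open>\<rho> \<in> {1..M}\<close> line that]
      denom_constant_along_characteristic[OF line end_value that]
    by simp
  then obtain k where "\<forall>q\<in>{0..p}. g \<rho> (q, c - q / s) = k"
    using has_field_derivative_zero_constant[of "{0..p}"] by blast
  with q show ?thesis by force
qed

end

theorem proposition2:
  fixes M :: nat and lam P :: real
    and lams :: "nat \<Rightarrow> real"
    and g gp gv :: "nat \<Rightarrow> real \<times> real \<Rightarrow> real"
  defines "D \<equiv> {0..<P} \<times> {0..}"
  assumes lam_nonneg: "lam \<ge> 0"
    and lams_pos: "\<And>\<rho>. \<rho> \<in> {1..M} \<Longrightarrow> lams \<rho> > 0"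
    and P_pos: "P > 0"
    and deriv: "\<And>\<rho> z. \<rho> \<in> {1..M} \<Longrightarrow> z \<in> D \<Longrightarrow>
        (g \<rho> has_derivative (\<lambda>h. fst h * gp \<rho> z + snd h * gv \<rho> z)) (at z within D)"
    and cont_p: "\<And>\<rho>. \<rho> \<in> {1..M} \<Longrightarrow> continuous_on D (gp \<rho>)"
    and cont_v: "\<And>\<rho>. \<rho> \<in> {1..M} \<Longrightarrow> continuous_on D (gv \<rho>)"
    and denom_pos: "\<And>z. z \<in> D \<Longrightarrow> lam + (\<Sum>\<gamma>=1..M. g \<gamma> z) > 0"
    and pde: "\<And>\<rho> z. \<rho> \<in> {1..M} \<Longrightarrow> z \<in> D \<Longrightarrow>
        gp \<rho> z = gv \<rho> z / (lam + (\<Sum>\<gamma>=1..M. g \<gamma> z))"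
    and init: "\<And>\<rho> v. \<rho> \<in> {1..M} \<Longrightarrow> v \<ge> 0 \<Longrightarrow>
        g \<rho> (0, v) = inverse (1 / lams \<rho> + v)"
  shows "(\<forall>z\<in>D. \<forall>\<rho>\<in>{1..M}.
            g \<rho> z = inverse (1 / lams \<rho> + snd z + fst z / (lam + (\<Sum>\<gamma>=1..M. g \<gamma> z))))
       \<and> (\<forall>z\<in>D. (\<Sum>\<gamma>=1..M. g \<gamma> z) =
            (\<Sum>\<rho>=1..M. inverse (1 / lams \<rho> + snd z + fst z / (lam + (\<Sum>\<gamma>=1..M. g \<gamma> z)))))"
proof -
  interpret transport_system M lam D g gp gv
    using deriv cont_v denom_pos pde by unfold_locales
  have "g \<rho> (p, v) = inverse (1 / lams \<rho> + v + p / denom (p, v))"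
    if z: "(p, v) \<in> D" and \<rho>: "\<rho> \<in> {1..M}" for p v \<rho>
  proof -
    define s where "s = denom (p, v)"
    define c where "c = v + p / s"
    have "s > 0" using denom_pos[OF z] by (simp add: s_def denom_def)
    have "p \<in> {0..p}" "c \<ge> 0" "(p, c - p / s) = (p, v)"
      using z \<open>s > 0\<close> by (auto simp: D_def c_def)
    moreover have line: "(\<lambda>q. (q, c - q / s)) ` {0..p} \<subseteq> D"
      using z \<open>s > 0\<close> by (auto simp: D_def c_def intro!: add_increasing divide_right_mono)
    ultimately have "g \<rho> (p, v) = g \<rho> (0, c)"
      using g_constant_along_characteristic[OF \<rho> line] by (metis s_def)
    also have "\<dots> = inverse (1 / lams \<rho> + c)" using init[OF \<rho> \<open>c \<ge> 0\<close>] .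
    finally show ?thesis by (simp add: c_def s_def add.assoc)
  qed
  then show ?thesis by (auto simp: D_def denom_def)
qed

end
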